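(* Let $n \geq 2$ and let $(x_i,y_i)_{i=1}^n$ be labeled examples with $x_i \in \mathbb{R}^d$, $y_i \in \{-1,+1\}$ and $\max_i\|x_i\| \leq 1$. Let $X = [x_1,\dots,x_n]\in\mathbb{R}^{d\times n}$ and let $\sigma^2 \geq \frac{1}{n}\|X\|^2$ (spectral norm). Let $\lambda > 0$, $b\in\{1,\dots,n\}$, $T \geq 1$, and $\beta_b := 1 + \frac{(b-1)(n\sigma^2-1)}{n-1}$. Consider the SVM primal objective $$P(w) := \frac{1}{n}\sum_{i=1}^n \max\{0, 1 - y_i\langle w, x_i\rangle\} + \frac{\lambda}{2}\|w\|^2.$$ Run mini-batched Pegasos: set $w^{(1)} = 0$; for $t = 1,\dots,T$, draw $A_t$ uniformly at random among subsets of $\{1,\dots,n\}$ of cardinality $b$ (independently across iterations), set $\eta_t = \frac{1}{\lambda t}$, $A_t^+ = \{i\in A_t : y_i\langle w^{(t)},x_i\rangle < 1\}$, and $$w^{(t+1)} = (1-\eta_t\lambda) w^{(t)} + \frac{\eta_t}{b}\sum_{i\in A_t^+} y_i x_i.$$ Let $\bar{w}^{(T)} = \frac{2}{T}\sum_{t=\lfloor T/2\rfloor+1}^T w^{(t)}$. Then $$\mathbb{E}\big[P(\bar{w}^{(T)})\big] - \inf_{w\in\mathbb{R}^d} P(w) \leq \frac{\beta_b}{b}\cdot\frac{30}{\lambda T}.$$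
   Context: $\|X\|$ is the spectral norm (largest singular value) of $X$. The expectation is over the random mini-batches. *)

theory Defs
  imports "HOL-Analysis.Analysis" "HOL-Probability.Probability"
begin

text \<open>Spectral norm of the matrix X = [x_0, ..., x_(n-1)] (columns x_i), defined as the
  operator norm of the map a |-> sum_i a_i x_i from R^n (Euclidean norm) to the space of the x_i,
  i.e. its largest singular value.\<close>
definition spec_norm :: "nat \<Rightarrow> (nat \<Rightarrow> 'a::euclidean_space) \<Rightarrow> real" where
  "spec_norm n x = Sup {norm (\<Sum>i<n. a i *\<^sub>R x i) | a. (\<Sum>i<n. (a i)\<^sup>2) \<le> 1}"

definition svm_primal :: "nat \<Rightarrow> (nat \<Rightarrow> 'a::euclidean_space) \<Rightarrow> (nat \<Rightarrow> real) \<Rightarrow> real \<Rightarrow> 'a \<Rightarrow> real" where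
  "svm_primal n x y lam w =
     (1 / real n) * (\<Sum>i<n. max 0 (1 - y i * (w \<bullet> x i))) + lam / 2 * (norm w)\<^sup>2"

text \<open>Mini-batched Pegasos iterates: pegasos_w ... A t = w^(t) for t >= 1, with w^(1) = 0
  and A t the mini-batch drawn at iteration t. (The value at t = 0 is an irrelevant dummy.)\<close>
primrec pegasos_w :: "(nat \<Rightarrow> 'a::euclidean_space) \<Rightarrow> (nat \<Rightarrow> real) \<Rightarrow> real \<Rightarrow> nat
    \<Rightarrow> (nat \<Rightarrow> nat set) \<Rightarrow> nat \<Rightarrow> 'a" where
  "pegasos_w x y lam b A 0 = 0"
| "pegasos_w x y lam b A (Suc t) =
     (if t = 0 then 0 else
        (let w = pegasos_w x y lam b A t; eta = 1 / (lam * real t) in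
           (1 - eta * lam) *\<^sub>R w
           + (eta / real b) *\<^sub>R (\<Sum>i\<in>{i \<in> A t. y i * (w \<bullet> x i) < 1}. y i *\<^sub>R x i)))"

definition pegasos_avg :: "(nat \<Rightarrow> 'a::euclidean_space) \<Rightarrow> (nat \<Rightarrow> real) \<Rightarrow> real \<Rightarrow> nat
    \<Rightarrow> nat \<Rightarrow> (nat \<Rightarrow> nat set) \<Rightarrow> 'a" where
  "pegasos_avg x y lam b T A = (2 / real T) *\<^sub>R (\<Sum>t\<in>{T div 2 + 1..T}. pegasos_w x y lam b A t)"

definition batches :: "nat \<Rightarrow> nat \<Rightarrow> nat set set" where
  "batches n b = {S. S \<subseteq> {..<n} \<and> card S = b}"

definition batch_seq_pmf :: "nat \<Rightarrow> nat \<Rightarrow> nat \<Rightarrow> (nat \<Rightarrow> nat set) pmf" where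
  "batch_seq_pmf n b T = Pi_pmf {1..T} {} (\<lambda>_. pmf_of_set (batches n b))"

end

theory Submission
  imports Defs
begin

text \<open>Pegasos is stochastic subgradient descent with step size \<open>1/(\<lambda>t)\<close> on the
  \<open>\<lambda>\<close>-strongly convex objective \<open>P\<close>. The mini-batch direction is an unbiased estimate of a
  negated subgradient of the hinge part, and counting how often two examples share a batch bounds
  its second moment by \<open>\<beta>\<^sub>b/b\<close>; the spectral norm enters through
  \<open>\<parallel>\<Sum>\<^sub>i a\<^sub>i x\<^sub>i\<parallel>\<^sup>2 \<le> \<parallel>X\<parallel>\<^sup>2 \<Sum>\<^sub>i a\<^sub>i\<^sup>2\<close>. The one-step recursion for
  \<open>E \<parallel>w\<^sub>t - w\<^sup>*\<parallel>\<^sup>2\<close> gives the rate \<open>1/t\<close>, and telescoping the same recursion over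
  the second half of the run bounds the average excess objective there. Jensen's inequality passes
  this to the suffix average; for odd \<open>T\<close> the weight \<open>2/T\<close> of the Pegasos average is slightly
  larger than the averaging weight, which is paid for with one more subgradient inequality.\<close>

section \<open>Expectations over finite product distributions\<close>

lemma expectation_pair_pmf_finite:
  fixes f :: "'a \<times> 'b \<Rightarrow> real"
  assumes fp: "finite (set_pmf p)" and fq: "finite (set_pmf q)"
  shows "measure_pmf.expectation (pair_pmf p q) f
       = measure_pmf.expectation q (\<lambda>b. measure_pmf.expectation p (\<lambda>a. f (a, b)))"
proof -
  have "measure_pmf.expectation (pair_pmf p q) f
      = (\<Sum>z\<in>set_pmf p \<times> set_pmf q. f z * pmf (pair_pmf p q) z)"
    using fp fq by (intro integral_measure_pmf_real) (auto simp: set_pair_pmf)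
  also have "\<dots> = (\<Sum>a\<in>set_pmf p. \<Sum>b\<in>set_pmf q. f (a, b) * pmf p a * pmf q b)"
    by (subst sum.cartesian_product) (auto intro!: sum.cong simp: pmf_pair mult_ac)
  also have "\<dots> = (\<Sum>b\<in>set_pmf q. (\<Sum>a\<in>set_pmf p. f (a, b) * pmf p a) * pmf q b)"
    by (subst sum.swap) (simp add: sum_distrib_right)
  also have "\<dots> = measure_pmf.expectation q (\<lambda>b. measure_pmf.expectation p (\<lambda>a. f (a, b)))"
    using fp fq by (subst integral_measure_pmf_real[of "set_pmf q"])
      (auto intro!: sum.cong simp: integral_measure_pmf_real[of "set_pmf p"])
  finally show ?thesis .
qed

lemma expectation_Pi_pmf_resample:
  fixes F :: "('i \<Rightarrow> 'c) \<Rightarrow> real"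
  assumes A: "finite A" and t: "t \<in> A" and fin: "\<And>i. finite (set_pmf (p i))"
  shows "measure_pmf.expectation (Pi_pmf A d p) F
       = measure_pmf.expectation (Pi_pmf A d p)
           (\<lambda>f. measure_pmf.expectation (p t) (\<lambda>s. F (f(t := s))))"
proof -
  let ?M = "Pi_pmf A d p" and ?M' = "Pi_pmf (A - {t}) d p"
  have fin': "finite (set_pmf ?M')"
    using A fin by (subst set_Pi_pmf) (auto intro!: finite_PiE_dflt)
  have "A = insert t (A - {t})" using t by auto
  hence M: "?M = map_pmf (\<lambda>(s, g). g(t := s)) (pair_pmf (p t) ?M')"
    using A Pi_pmf_insert[of "A - {t}" t d p] by simp
  have "measure_pmf.expectation ?M F
      = measure_pmf.expectation (pair_pmf (p t) ?M') (\<lambda>(s, g). F (g(t := s)))"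
    by (subst M) (simp add: case_prod_beta')
  also have "\<dots> = measure_pmf.expectation ?M'
                    (\<lambda>g. measure_pmf.expectation (p t) (\<lambda>s. F (g(t := s))))"
    by (subst expectation_pair_pmf_finite[OF fin fin']) simp
  also have "\<dots> = measure_pmf.expectation ?M
                    (\<lambda>f. measure_pmf.expectation (p t) (\<lambda>s. F ((f(t := d))(t := s))))"
    by (subst Pi_pmf_remove[OF A]) simp
  finally show ?thesis by simp
qed

section \<open>Counting mini-batches\<close>

lemma card_supersets_of_card:
  assumes U: "finite U" and F: "F \<subseteq> U" and k: "card F \<le> k"
  shows "card {S. S \<subseteq> U \<and> card S = k \<and> F \<subseteq> S} = (card U - card F) choose (k - card F)"
proof -
  have fF: "finite F" using U F finite_subset by blast
  have "bij_betw (\<lambda>S. S - F) {S. S \<subseteq> U \<and> card S = k \<and> F \<subseteq> S}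
          {S'. S' \<subseteq> U - F \<and> card S' = k - card F}"
  proof (rule bij_betw_byWitness[where f' = "\<lambda>S'. S' \<union> F"])
    show "(\<lambda>S. S - F) ` {S. S \<subseteq> U \<and> card S = k \<and> F \<subseteq> S}
        \<subseteq> {S'. S' \<subseteq> U - F \<and> card S' = k - card F}"
      using U fF by (auto simp: card_Diff_subset finite_subset)
    show "(\<lambda>S'. S' \<union> F) ` {S'. S' \<subseteq> U - F \<and> card S' = k - card F}
        \<subseteq> {S. S \<subseteq> U \<and> card S = k \<and> F \<subseteq> S}"
    proof (rule image_subsetI, safe)
      fix S' assume S': "S' \<subseteq> U - F" "card S' = k - card F"
      hence "finite S'" "S' \<inter> F = {}" using U finite_subset by auto
      thus "card (S' \<union> F) = k" using S' k fF by (simp add: card_Un_disjoint)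
    qed (use F in auto)
  qed auto
  hence "card {S. S \<subseteq> U \<and> card S = k \<and> F \<subseteq> S} = card {S'. S' \<subseteq> U - F \<and> card S' = k - card F}"
    by (rule bij_betw_same_card)
  also have "\<dots> = card (U - F) choose (k - card F)"
    using U by (intro n_subsets) auto
  finally show ?thesis using F fF by (simp add: card_Diff_subset)
qed

lemma finite_batches: "finite (batches n b)"
  unfolding batches_def by (auto intro: finite_subset)

lemma card_batches: "card (batches n b) = n choose b"
  unfolding batches_def using n_subsets[of "{..<n}" b] by simp

lemma of_nat_binomial_pred:
  assumes "1 \<le> b"
  shows "real ((n - 1) choose (b - 1)) * real n = real (n choose b) * real b"
proof (cases n)
  case (Suc m)
  obtain k where "b = Suc k" using assms by (cases b) auto
  thus ?thesis using Suc Suc_times_binomial_eq[of m k] by (metis diff_Suc_1 mult.commute of_nat_mult)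
qed (use assms in simp)

lemma card_batches_containing:
  assumes i: "i < n"
  shows "real (card {S \<in> batches n b. i \<in> S}) = real (n choose b) * real b / real n"
proof (cases "b = 0")
  case True
  hence empty: "{S \<in> batches n b. i \<in> S} = {}"
    by (auto simp: batches_def dest: finite_subset[OF _ finite_lessThan])
  show ?thesis unfolding empty using True by simp
next
  case False
  have "{S \<in> batches n b. i \<in> S} = {S. S \<subseteq> {..<n} \<and> card S = b \<and> {i} \<subseteq> S}"
    by (auto simp: batches_def)
  hence "card {S \<in> batches n b. i \<in> S} = (n - 1) choose (b - 1)"
    using card_supersets_of_card[of "{..<n}" "{i}" b] i False by simp
  thus ?thesis using of_nat_binomial_pred[of b n] i False by (simp add: field_simps)
qed

lemma card_batches_containing_pair:
  assumes i: "i < n" and j: "j < n" and ij: "i \<noteq> j"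
  shows "real (card {S \<in> batches n b. i \<in> S \<and> j \<in> S})
       = real (n choose b) * (real b * (real b - 1)) / (real n * (real n - 1))"
proof (cases "b < 2")
  case True
  have empty: "{S \<in> batches n b. i \<in> S \<and> j \<in> S} = {}"
  proof safe
    fix S assume S: "S \<in> batches n b" "i \<in> S" "j \<in> S"
    hence "finite S" "card S = b" by (auto simp: batches_def dest: finite_subset[OF _ finite_lessThan])
    hence "card {i, j} \<le> b" using S by (metis card_mono empty_subsetI insert_subset)
    thus "S \<in> {}" using True ij by simp
  qed
  moreover have "real b * (real b - 1) = 0" using True by (cases b) auto
  ultimately show ?thesis unfolding empty by simp
next
  case False
  have n2: "2 \<le> n" using i j ij by linarith
  have "{S \<in> batches n b. i \<in> S \<and> j \<in> S} = {S. S \<subseteq> {..<n} \<and> card S = b \<and> {i, j} \<subseteq> S}"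
    by (auto simp: batches_def)
  hence "card {S \<in> batches n b. i \<in> S \<and> j \<in> S} = (n - 1 - 1) choose (b - 1 - 1)"
    using card_supersets_of_card[of "{..<n}" "{i, j}" b] i j ij False by (simp add: numeral_2_eq_2)
  moreover have "real ((n - 1 - 1) choose (b - 1 - 1)) * (real n * (real n - 1))
      = real ((n - 1) choose (b - 1)) * real n * (real b - 1)"
    using of_nat_binomial_pred[of "b - 1" "n - 1"] False n2 by (simp add: of_nat_diff)
  also have "\<dots> = real (n choose b) * (real b * (real b - 1))"
    using of_nat_binomial_pred[of b n] False by simp
  ultimately show ?thesis using n2 by (simp add: field_simps)
qed

lemma sum_sum_family_eq:
  fixes z :: "'i \<Rightarrow> 'a::real_vector"
  assumes F: "finite F" and U: "finite U" and sub: "\<And>S. S \<in> F \<Longrightarrow> g S \<subseteq> U"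
  shows "(\<Sum>S\<in>F. \<Sum>i\<in>g S. z i) = (\<Sum>i\<in>U. real (card {S \<in> F. i \<in> g S}) *\<^sub>R z i)"
proof -
  have "\<And>S. S \<in> F \<Longrightarrow> {i \<in> U. i \<in> g S} = g S" using sub by auto
  hence "(\<Sum>S\<in>F. \<Sum>i\<in>g S. z i) = (\<Sum>S\<in>F. \<Sum>i\<in>{i \<in> U. i \<in> g S}. z i)" by simp
  also have "\<dots> = (\<Sum>i\<in>U. \<Sum>S\<in>{S \<in> F. i \<in> g S}. z i)"
    by (rule sum.swap_restrict[OF F U])
  finally show ?thesis by (simp add: sum_constant_scaleR)
qed

lemma sum_power2_norm_sum_family:
  fixes z :: "'i \<Rightarrow> 'a::real_inner"
  assumes F: "finite F" and U: "finite U" and sub: "\<And>S. S \<in> F \<Longrightarrow> S \<subseteq> U"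
  shows "(\<Sum>S\<in>F. (norm (\<Sum>i\<in>S. z i))\<^sup>2)
       = (\<Sum>i\<in>U. \<Sum>j\<in>U. real (card {S \<in> F. i \<in> S \<and> j \<in> S}) * (z i \<bullet> z j))"
proof -
  have "(norm (\<Sum>i\<in>S. z i))\<^sup>2 = (\<Sum>i\<in>S. \<Sum>j\<in>S. z i \<bullet> z j)" for S
    by (simp add: power2_norm_eq_inner inner_sum_left inner_sum_right) (rule sum.swap)
  hence "(norm (\<Sum>i\<in>S. z i))\<^sup>2 = (\<Sum>(i, j)\<in>S \<times> S. z i \<bullet> z j)" for S
    by (simp add: sum.cartesian_product)
  hence "(\<Sum>S\<in>F. (norm (\<Sum>i\<in>S. z i))\<^sup>2)
      = (\<Sum>p\<in>U \<times> U. real (card {S \<in> F. p \<in> S \<times> S}) * (case p of (i, j) \<Rightarrow> z i \<bullet> z j))"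
    using sub by (simp add: sum_sum_family_eq[OF F finite_cartesian_product[OF U U]] Sigma_mono)
  also have "\<dots> = (\<Sum>i\<in>U. \<Sum>j\<in>U. real (card {S \<in> F. i \<in> S \<and> j \<in> S}) * (z i \<bullet> z j))"
    by (simp add: sum.cartesian_product')
  finally show ?thesis .
qed

lemma sum_sum_diag_split:
  fixes f :: "'i \<Rightarrow> 'i \<Rightarrow> real"
  assumes "finite I"
  shows "(\<Sum>i\<in>I. \<Sum>j\<in>I. (if i = j then p else q) * f i j)
       = q * (\<Sum>i\<in>I. \<Sum>j\<in>I. f i j) + (p - q) * (\<Sum>i\<in>I. f i i)"
proof -
  have "(\<Sum>i\<in>I. \<Sum>j\<in>I. (if i = j then p else q) * f i j)
      = (\<Sum>i\<in>I. \<Sum>j\<in>I. q * f i j + (if i = j then (p - q) * f i j else 0))"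
    by (intro sum.cong refl) (simp add: algebra_simps)
  also have "\<dots> = q * (\<Sum>i\<in>I. \<Sum>j\<in>I. f i j) + (p - q) * (\<Sum>i\<in>I. f i i)"
    using assms by (simp add: sum.distrib sum_distrib_left)
  finally show ?thesis .
qed

section \<open>Convexity and norm inequalities\<close>

lemma norm_sum_le_spec_norm:
  fixes x :: "nat \<Rightarrow> 'a::euclidean_space"
  assumes a: "(\<Sum>i<n. (a i)\<^sup>2) \<le> 1"
  shows "norm (\<Sum>i<n. a i *\<^sub>R x i) \<le> spec_norm n x"
  unfolding spec_norm_def
proof (rule cSup_upper)
  show "bdd_above {norm (\<Sum>i<n. a i *\<^sub>R x i) |a. (\<Sum>i<n. (a i)\<^sup>2) \<le> 1}"
  proof (rule bdd_aboveI[where M = "\<Sum>i<n. norm (x i)"], safe)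
    fix c :: "nat \<Rightarrow> real" assume c: "(\<Sum>i<n. (c i)\<^sup>2) \<le> 1"
    have "\<bar>c i\<bar> \<le> 1" if "i < n" for i
    proof -
      have "(c i)\<^sup>2 \<le> (\<Sum>i<n. (c i)\<^sup>2)" using that by (intro member_le_sum) auto
      hence "(c i)\<^sup>2 \<le> 1" using c by simp
      thus ?thesis by (simp add: abs_square_le_1)
    qed
    hence "(\<Sum>i<n. norm (c i *\<^sub>R x i)) \<le> (\<Sum>i<n. norm (x i))"
      by (intro sum_mono) (auto intro!: mult_left_le_one_le)
    thus "norm (\<Sum>i<n. c i *\<^sub>R x i) \<le> (\<Sum>i<n. norm (x i))"
      by (rule order_trans[OF norm_sum])
  qed
qed (use a in blast)

lemma power2_norm_sum_le_spec_norm: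
  fixes x :: "nat \<Rightarrow> 'a::euclidean_space"
  shows "(norm (\<Sum>i<n. a i *\<^sub>R x i))\<^sup>2 \<le> (spec_norm n x)\<^sup>2 * (\<Sum>i<n. (a i)\<^sup>2)"
proof -
  define s where "s = sqrt (\<Sum>i<n. (a i)\<^sup>2)"
  have s2: "s\<^sup>2 = (\<Sum>i<n. (a i)\<^sup>2)" unfolding s_def by (simp add: sum_nonneg)
  show ?thesis
  proof (cases "s = 0")
    case True
    hence "\<forall>i\<in>{..<n}. a i = 0" using s2 by (simp add: sum_nonneg_eq_0_iff)
    thus ?thesis by simp
  next
    case False
    moreover have "0 \<le> s" unfolding s_def by (simp add: sum_nonneg)
    ultimately have s: "0 < s" by simp
    have "(\<Sum>i<n. (a i / s)\<^sup>2) = (\<Sum>i<n. (a i)\<^sup>2) / s\<^sup>2"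
      by (simp add: power_divide sum_divide_distrib)
    also have "\<dots> = 1" using s by (simp flip: s2)
    finally have "(\<Sum>i<n. (a i / s)\<^sup>2) = 1" .
    hence "norm (\<Sum>i<n. (a i / s) *\<^sub>R x i) \<le> spec_norm n x"
      by (intro norm_sum_le_spec_norm) simp
    also have "(\<Sum>i<n. (a i / s) *\<^sub>R x i) = (1 / s) *\<^sub>R (\<Sum>i<n. a i *\<^sub>R x i)"
      by (simp add: scaleR_sum_right)
    finally have "norm (\<Sum>i<n. a i *\<^sub>R x i) \<le> spec_norm n x * s"
      using s by (simp add: divide_le_eq)
    hence "(norm (\<Sum>i<n. a i *\<^sub>R x i))\<^sup>2 \<le> (spec_norm n x * s)\<^sup>2"
      by (intro power_mono) auto
    thus ?thesis by (simp only: power_mult_distrib s2)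
  qed
qed

lemma power2_norm_convex_comb:
  fixes a c :: "'a::real_inner"
  shows "(norm ((1 - s) *\<^sub>R a + s *\<^sub>R c))\<^sup>2
       = (1 - s) * (norm a)\<^sup>2 + s * (norm c)\<^sup>2 - s * (1 - s) * (norm (a - c))\<^sup>2"
  unfolding power2_norm_eq_inner
  by (simp add: inner_add_left inner_add_right inner_diff_left inner_diff_right
      inner_commute algebra_simps)

lemma convex_on_power2_norm: "convex_on UNIV (\<lambda>v::'a::real_inner. (norm v)\<^sup>2)"
proof (rule convex_onI)
  fix t :: real and a c :: 'a assume "0 < t" "t < 1"
  then show "(norm ((1 - t) *\<^sub>R a + t *\<^sub>R c))\<^sup>2 \<le> (1 - t) * (norm a)\<^sup>2 + t * (norm c)\<^sup>2"
    unfolding power2_norm_convex_comb by simp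
qed simp

lemma convex_on_mean:
  assumes "finite I" "I \<noteq> {}" "convex_on UNIV f"
  shows "f ((1 / real (card I)) *\<^sub>R (\<Sum>i\<in>I. v i)) \<le> (\<Sum>i\<in>I. f (v i)) / real (card I)"
proof -
  have "f (\<Sum>i\<in>I. (1 / real (card I)) *\<^sub>R v i) \<le> (\<Sum>i\<in>I. (1 / real (card I)) * f (v i))"
    using assms by (intro convex_on_sum) (auto simp: card_gt_0_iff)
  thus ?thesis by (simp add: scaleR_sum_right sum_divide_distrib)
qed

lemma power2_norm_diff_le:
  fixes p q :: "'a::real_inner"
  shows "(norm (p - q))\<^sup>2 \<le> 2 * (norm p)\<^sup>2 + 2 * (norm q)\<^sup>2"
proof -
  have "2 * (norm p)\<^sup>2 + 2 * (norm q)\<^sup>2 - (norm (p - q))\<^sup>2 = (norm (p + q))\<^sup>2"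
    unfolding power2_norm_eq_inner
    by (simp add: inner_add_left inner_add_right inner_diff_left inner_diff_right inner_commute)
  thus ?thesis by (metis diff_ge_0_iff_ge zero_le_power2)
qed

lemma power2_norm_diff_scaleR:
  fixes a g :: "'a::real_inner"
  shows "(norm (a - e *\<^sub>R g))\<^sup>2 = (norm a)\<^sup>2 - 2 * e * (g \<bullet> a) + e\<^sup>2 * (norm g)\<^sup>2"
  unfolding power2_norm_eq_inner
  by (simp add: inner_diff_left inner_diff_right inner_commute power2_eq_square algebra_simps)

lemma max_zero_convex_comb:
  fixes p q s :: real
  assumes "0 \<le> s" "s \<le> 1"
  shows "max 0 ((1 - s) * p + s * q) \<le> (1 - s) * max 0 p + s * max 0 q"
proof -
  have "(1 - s) * p \<le> (1 - s) * max 0 p" "s * q \<le> s * max 0 q"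
    using assms by (intro mult_left_mono; simp)+
  moreover have "0 \<le> (1 - s) * max 0 p + s * max 0 q" using assms by simp
  ultimately show ?thesis by linarith
qed

lemma mult_le_half_power2_sum:
  fixes a c l :: real
  assumes l: "0 < l"
  shows "a * c \<le> a\<^sup>2 / (2 * l) + l * c\<^sup>2 / 2"
proof -
  have "0 \<le> (a - l * c)\<^sup>2" by simp
  hence "2 * l * (a * c) \<le> a\<^sup>2 + l\<^sup>2 * c\<^sup>2" by (simp add: power2_eq_square algebra_simps)
  thus ?thesis using l by (simp add: field_simps power2_eq_square)
qed

lemma strongly_convex_quadratic_growth:
  fixes f :: "'a::real_normed_vector \<Rightarrow> real"
  assumes convex: "\<And>a c s. 0 \<le> s \<Longrightarrow> s \<le> 1 \<Longrightarrow>
      f ((1 - s) *\<^sub>R a + s *\<^sub>R c) \<le> (1 - s) * f a + s * f c - mu / 2 * (s * (1 - s) * (norm (a - c))\<^sup>2)"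
    and min: "\<And>v. f wmin \<le> f v"
  shows "mu / 2 * (norm (w - wmin))\<^sup>2 \<le> f w - f wmin"
proof (rule ccontr)
  define a where "a = f w - f wmin"
  define c where "c = mu / 2 * (norm (w - wmin))\<^sup>2"
  assume "\<not> ?thesis"
  hence ac: "a < c" by (simp add: a_def c_def)
  have a0: "0 \<le> a" using min by (simp add: a_def)
  \<comment> \<open>Moving from the minimiser towards \<open>w\<close> by this fraction would decrease \<open>f\<close>.\<close>
  define s where "s = (c - a) / (2 * c)"
  have s: "0 < s" "s < 1" using ac a0 by (auto simp: s_def field_simps)
  have "f wmin \<le> f ((1 - s) *\<^sub>R wmin + s *\<^sub>R w)" by (rule min)
  also have "\<dots> \<le> (1 - s) * f wmin + s * f w - s * ((1 - s) * c)"
    using convex[of s wmin w] s by (simp add: c_def norm_minus_commute mult_ac)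
  finally have "s * ((1 - s) * c) \<le> s * a" by (simp add: a_def algebra_simps)
  hence "(1 - s) * c \<le> a" using s by simp
  moreover have "(1 - s) * c = (c + a) / 2" using ac a0 by (simp add: s_def field_simps)
  ultimately show False using ac by simp
qed

section \<open>Two scalar recurrences\<close>

lemma recurrence_le_const:
  fixes q :: "nat \<Rightarrow> real"
  assumes q1: "q 1 \<le> g"
    and rec: "\<And>t. 1 \<le> t \<Longrightarrow> t \<le> T \<Longrightarrow> q (Suc t) \<le> (1 - 1 / real t) * q t + g / real t"
    and t: "1 \<le> t" "t \<le> Suc T"
  shows "q t \<le> g"
  using t
proof (induction t rule: dec_induct)
  case (step t)
  have "q (Suc t) \<le> (1 - 1 / real t) * q t + g / real t" using step by (intro rec) auto
  also have "\<dots> \<le> (1 - 1 / real t) * g + g / real t"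
    using step by (intro add_right_mono mult_left_mono) auto
  also have "\<dots> = g" using step by (simp add: field_simps)
  finally show ?case .
qed (use q1 in simp)

lemma recurrence_le_inverse:
  fixes d :: "nat \<Rightarrow> real"
  assumes c: "0 \<le> c" and d1: "0 \<le> d 1"
    and rec: "\<And>t. 1 \<le> t \<Longrightarrow> t \<le> T \<Longrightarrow> d (Suc t) \<le> (1 - 2 / real t) * d t + c / (real t)\<^sup>2"
    and t: "2 \<le> t" "t \<le> Suc T"
  shows "d t \<le> 2 * c / real t"
  using t
proof (induction t rule: dec_induct)
  case base
  have "d (Suc 1) \<le> (1 - 2 / real 1) * d 1 + c / (real 1)\<^sup>2" using base by (intro rec) auto
  thus ?case using d1 by (simp add: numeral_2_eq_2)
next
  case (step t)
  have t2: "2 \<le> real t" using step by simp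
  have "d (Suc t) \<le> (1 - 2 / real t) * d t + c / (real t)\<^sup>2" using step by (intro rec) auto
  also have "\<dots> \<le> (1 - 2 / real t) * (2 * c / real t) + c / (real t)\<^sup>2"
    using step t2 by (intro add_right_mono mult_left_mono) auto
  also have "\<dots> = c * ((2 * real t - 3) / (real t)\<^sup>2)"
    using t2 by (simp add: field_simps power2_eq_square)
  also have "\<dots> \<le> c * (2 / (real t + 1))"
  proof (rule mult_left_mono[OF _ c])
    have "(2 * real t - 3) * (real t + 1) \<le> 2 * (real t)\<^sup>2"
      using t2 by (simp add: power2_eq_square algebra_simps)
    thus "(2 * real t - 3) / (real t)\<^sup>2 \<le> 2 / (real t + 1)"
      using t2 by (simp add: divide_le_eq le_divide_eq)
  qed
  finally show ?case by (simp add: ac_simps)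
qed

lemma sum_le_telescoping:
  fixes e d :: "nat \<Rightarrow> real"
  assumes hyp: "\<And>t. k < t \<Longrightarrow> t \<le> s \<Longrightarrow> e t \<le> (real t - 1) * d t - real t * d (Suc t) + c / real t"
    and c: "0 \<le> c" and ks: "k \<le> s"
  shows "(\<Sum>t\<in>{Suc k..s}. e t)
       \<le> real k * d (Suc k) - real s * d (Suc s) + c * (real s - real k) / (real k + 1)"
  using ks hyp
proof (induction s rule: dec_induct)
  case (step s)
  have IH: "(\<Sum>t\<in>{Suc k..s}. e t)
      \<le> real k * d (Suc k) - real s * d (Suc s) + c * (real s - real k) / (real k + 1)"
    using step.prems by (intro step.IH) (metis le_SucI)
  have last: "e (Suc s) \<le> real s * d (Suc s) - real (Suc s) * d (Suc (Suc s)) + c / real (Suc s)"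
    using step.prems[of "Suc s"] step.hyps by auto
  have "c / real (Suc s) \<le> c / (real k + 1)"
    using step.hyps c by (intro divide_left_mono) auto
  moreover have "c * (real s - real k) / (real k + 1) + c / (real k + 1)
      = c * (real (Suc s) - real k) / (real k + 1)"
    unfolding add_divide_distrib[symmetric] by (simp add: algebra_simps)
  moreover have "(\<Sum>t\<in>{Suc k..Suc s}. e t) = (\<Sum>t\<in>{Suc k..s}. e t) + e (Suc s)"
    using step.hyps by simp
  ultimately show ?case using IH last by linarith
qed simp

section \<open>The SVM objective\<close>

locale svm =
  fixes n :: nat and x :: "nat \<Rightarrow> 'a::euclidean_space" and y :: "nat \<Rightarrow> real" and lam :: real
  assumes lam_pos: "0 < lam"
begin

abbreviation P :: "'a \<Rightarrow> real" where "P \<equiv> svm_primal n x y lam"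

definition hinge_loss :: "'a \<Rightarrow> real" where
  "hinge_loss w = (1 / real n) * (\<Sum>i<n. max 0 (1 - y i * (w \<bullet> x i)))"

text \<open>Negated subgradients of the hinge terms; Pegasos moves along them.\<close>
definition hinge_dir :: "'a \<Rightarrow> nat \<Rightarrow> 'a" where
  "hinge_dir w i = (if y i * (w \<bullet> x i) < 1 then y i *\<^sub>R x i else 0)"

definition mean_hinge_dir :: "'a \<Rightarrow> 'a" where
  "mean_hinge_dir w = (1 / real n) *\<^sub>R (\<Sum>i<n. hinge_dir w i)"

lemma svm_primal_eq: "P w = hinge_loss w + lam / 2 * (norm w)\<^sup>2"
  by (simp add: hinge_loss_def svm_primal_def)

lemma hinge_loss_nonneg: "0 \<le> hinge_loss w"
  unfolding hinge_loss_def by (intro mult_nonneg_nonneg sum_nonneg) auto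

lemma hinge_loss_subgradient: "hinge_loss w - mean_hinge_dir w \<bullet> (u - w) \<le> hinge_loss u"
proof -
  have "max 0 (1 - y i * (w \<bullet> x i)) - hinge_dir w i \<bullet> (u - w) \<le> max 0 (1 - y i * (u \<bullet> x i))" for i
  proof (cases "y i * (w \<bullet> x i) < 1")
    case True
    hence "max 0 (1 - y i * (w \<bullet> x i)) - hinge_dir w i \<bullet> (u - w) = 1 - y i * (u \<bullet> x i)"
      by (simp add: hinge_dir_def inner_diff_right inner_commute algebra_simps)
    thus ?thesis by simp
  qed (simp add: hinge_dir_def)
  hence "(1 / real n) * (\<Sum>i<n. max 0 (1 - y i * (w \<bullet> x i)) - hinge_dir w i \<bullet> (u - w))
      \<le> hinge_loss u"
    unfolding hinge_loss_def by (intro mult_left_mono sum_mono) auto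
  thus ?thesis
    by (simp add: hinge_loss_def mean_hinge_dir_def inner_sum_left sum_subtractf right_diff_distrib)
qed

lemma hinge_loss_convex_comb:
  assumes "0 \<le> s" "s \<le> 1"
  shows "hinge_loss ((1 - s) *\<^sub>R a + s *\<^sub>R c) \<le> (1 - s) * hinge_loss a + s * hinge_loss c"
proof -
  have "max 0 (1 - y i * (((1 - s) *\<^sub>R a + s *\<^sub>R c) \<bullet> x i))
      \<le> (1 - s) * max 0 (1 - y i * (a \<bullet> x i)) + s * max 0 (1 - y i * (c \<bullet> x i))" for i
    using max_zero_convex_comb[OF assms, of "1 - y i * (a \<bullet> x i)" "1 - y i * (c \<bullet> x i)"]
    by (simp add: inner_add_left algebra_simps)
  hence "hinge_loss ((1 - s) *\<^sub>R a + s *\<^sub>R c)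
      \<le> (1 / real n) * (\<Sum>i<n. (1 - s) * max 0 (1 - y i * (a \<bullet> x i)) + s * max 0 (1 - y i * (c \<bullet> x i)))"
    unfolding hinge_loss_def by (intro mult_left_mono sum_mono) auto
  also have "\<dots> = (1 / real n) * ((1 - s) * (\<Sum>i<n. max 0 (1 - y i * (a \<bullet> x i)))
                                  + s * (\<Sum>i<n. max 0 (1 - y i * (c \<bullet> x i))))"
    by (simp add: sum.distrib sum_distrib_left)
  also have "\<dots> = (1 - s) * hinge_loss a + s * hinge_loss c"
    unfolding hinge_loss_def by (simp only: distrib_left mult.left_commute)
  finally show ?thesis .
qed

lemma svm_primal_convex_comb:
  assumes "0 \<le> s" "s \<le> 1"
  shows "P ((1 - s) *\<^sub>R a + s *\<^sub>R c)
       \<le> (1 - s) * P a + s * P c - lam / 2 * (s * (1 - s) * (norm (a - c))\<^sup>2)"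
proof -
  have "lam / 2 * (norm ((1 - s) *\<^sub>R a + s *\<^sub>R c))\<^sup>2
      = (1 - s) * (lam / 2 * (norm a)\<^sup>2) + s * (lam / 2 * (norm c)\<^sup>2)
        - lam / 2 * (s * (1 - s) * (norm (a - c))\<^sup>2)"
    unfolding power2_norm_convex_comb by (simp add: field_simps)
  thus ?thesis using hinge_loss_convex_comb[OF assms, of a c]
    unfolding svm_primal_eq by (simp add: algebra_simps)
qed

lemma convex_on_svm_primal: "convex_on UNIV P"
proof (rule convex_onI)
  fix t :: real and a c :: 'a assume t: "0 < t" "t < 1"
  have "0 \<le> lam / 2 * (t * (1 - t) * (norm (a - c))\<^sup>2)" using t lam_pos by simp
  thus "P ((1 - t) *\<^sub>R a + t *\<^sub>R c) \<le> (1 - t) * P a + t * P c"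
    using svm_primal_convex_comb[of t a c] t by linarith
qed simp

lemma svm_primal_has_min: "\<exists>wmin. \<forall>w. P wmin \<le> P w"
proof -
  define R where "R = sqrt (2 / lam)"
  have "\<exists>wmin\<in>cball 0 R. \<forall>w\<in>cball 0 R. P wmin \<le> P w"
    unfolding svm_primal_def
    by (intro continuous_attains_inf compact_cball continuous_intros)
       (use lam_pos in \<open>auto simp: R_def\<close>)
  then obtain wmin where wmin: "\<And>w. w \<in> cball 0 R \<Longrightarrow> P wmin \<le> P w" by blast
  \<comment> \<open>Outside the ball the regulariser alone exceeds \<open>P 0 \<le> 1\<close>.\<close>
  have "P wmin \<le> P w" for w
  proof (cases "w \<in> cball 0 R")
    case False
    hence "R\<^sup>2 < (norm w)\<^sup>2" using lam_pos by (intro power_strict_mono) (auto simp: R_def)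
    hence "1 < lam / 2 * (norm w)\<^sup>2" using lam_pos by (simp add: R_def field_simps)
    moreover have "P 0 \<le> 1" by (cases "n = 0") (simp_all add: svm_primal_def)
    moreover have "P wmin \<le> P 0" using wmin[of 0] lam_pos by (simp add: R_def)
    ultimately show ?thesis using hinge_loss_nonneg[of w] by (simp add: svm_primal_eq)
  qed (use wmin in simp)
  thus ?thesis by blast
qed

lemma svm_primal_quadratic_growth:
  assumes "\<And>v. P wmin \<le> P v"
  shows "lam / 2 * (norm (w - wmin))\<^sup>2 \<le> P w - P wmin"
  by (rule strongly_convex_quadratic_growth[OF svm_primal_convex_comb assms])

lemma svm_primal_strong_subgradient:
  "P w - P u + lam / 2 * (norm (w - u))\<^sup>2 \<le> (lam *\<^sub>R w - mean_hinge_dir w) \<bullet> (w - u)"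
proof -
  have "(lam *\<^sub>R w) \<bullet> (w - u)
      = lam / 2 * (norm w)\<^sup>2 - lam / 2 * (norm u)\<^sup>2 + lam / 2 * (norm (w - u))\<^sup>2"
    unfolding power2_norm_eq_inner
    by (simp add: inner_diff_left inner_diff_right inner_commute field_simps)
  moreover have "mean_hinge_dir w \<bullet> (u - w) = - (mean_hinge_dir w \<bullet> (w - u))"
    by (simp add: inner_diff_right)
  ultimately show ?thesis using hinge_loss_subgradient[of w u]
    unfolding svm_primal_eq inner_diff_left[of "lam *\<^sub>R w"] by linarith
qed

lemma hinge_loss_scaleR_le:
  assumes c: "1 \<le> c"
  shows "hinge_loss (c *\<^sub>R u)
       \<le> hinge_loss u + (c - 1) * ((norm (mean_hinge_dir (c *\<^sub>R u)))\<^sup>2 / (2 * lam) + lam * (norm u)\<^sup>2 / 2)"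
proof -
  define g where "g = mean_hinge_dir (c *\<^sub>R u)"
  have "hinge_loss (c *\<^sub>R u) - g \<bullet> (u - c *\<^sub>R u) \<le> hinge_loss u"
    unfolding g_def by (rule hinge_loss_subgradient)
  moreover have "g \<bullet> (u - c *\<^sub>R u) = (c - 1) * ((- g) \<bullet> u)"
    by (simp add: inner_diff_right algebra_simps)
  moreover have "(- g) \<bullet> u \<le> (norm g)\<^sup>2 / (2 * lam) + lam * (norm u)\<^sup>2 / 2"
    using norm_cauchy_schwarz[of "- g" u] mult_le_half_power2_sum[OF lam_pos, of "norm g" "norm u"]
    by simp
  ultimately show ?thesis
    using c unfolding g_def[symmetric] by (smt (verit, best) mult_left_mono)
qed

lemma svm_primal_scaleR_le:
  assumes c: "1 \<le> c" "c \<le> 1 + h" and h: "h \<le> 1"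
    and G: "(norm (mean_hinge_dir (c *\<^sub>R u)))\<^sup>2 \<le> G"
  shows "P (c *\<^sub>R u) \<le> P u + h * (G / (2 * lam) + 2 * lam * (norm u)\<^sup>2)"
proof -
  have "(c - 1) * ((norm (mean_hinge_dir (c *\<^sub>R u)))\<^sup>2 / (2 * lam) + lam * (norm u)\<^sup>2 / 2)
      \<le> h * (G / (2 * lam) + lam * (norm u)\<^sup>2 / 2)"
    using c G lam_pos by (intro mult_mono add_right_mono divide_right_mono) auto
  hence hinge: "hinge_loss (c *\<^sub>R u) \<le> hinge_loss u + h * (G / (2 * lam) + lam * (norm u)\<^sup>2 / 2)"
    using hinge_loss_scaleR_le[OF c(1), of u] by linarith
  have "c\<^sup>2 \<le> 1 + 3 * h"
  proof -
    have "c\<^sup>2 - 1 = (c - 1) * (c + 1)" by (simp add: power2_eq_square algebra_simps)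
    also have "\<dots> \<le> h * 3" using c h by (intro mult_mono) auto
    finally show ?thesis by simp
  qed
  hence "lam / 2 * (norm (c *\<^sub>R u))\<^sup>2 \<le> lam / 2 * (1 + 3 * h) * (norm u)\<^sup>2"
    using c lam_pos by (simp add: power_mult_distrib mult_right_mono)
  with hinge show ?thesis by (simp add: svm_primal_eq algebra_simps)
qed

end

section \<open>Mini-batch directions\<close>

locale pegasos = svm +
  fixes b T :: nat and sigma2 :: real
  assumes n_ge_2: "2 \<le> n"
    and labels: "\<forall>i<n. y i \<in> {-1, 1}"
    and norm_x_le_1: "\<forall>i<n. norm (x i) \<le> 1"
    and sigma2_ge: "(1 / real n) * (spec_norm n x)\<^sup>2 \<le> sigma2"
    and b_range: "b \<in> {1..n}"
    and T_ge_1: "1 \<le> T"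
begin

definition N :: real where "N = real (card (batches n b))"

definition beta :: real where
  "beta = 1 + (real b - 1) * (real n * sigma2 - 1) / (real n - 1)"

text \<open>The bound \<open>\<beta>\<^sub>b / b\<close> on the second moment of the mini-batch direction.\<close>
definition G2 :: real where "G2 = beta / real b"

definition batch_dir :: "'a \<Rightarrow> nat set \<Rightarrow> 'a" where
  "batch_dir w S = (1 / real b) *\<^sub>R (\<Sum>i\<in>{i \<in> S. y i * (w \<bullet> x i) < 1}. y i *\<^sub>R x i)"

lemma b_ge_1: "1 \<le> b" and b_le_n: "b \<le> n"
  using b_range by auto

lemma N_eq: "N = real (n choose b)"
  by (simp add: N_def card_batches)

lemma N_pos: "0 < N"
  using b_le_n by (simp add: N_eq)

lemma batches_nonempty: "batches n b \<noteq> {}"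
  using N_pos by (auto simp: N_def)

lemma batch_dir_eq: "finite S \<Longrightarrow> batch_dir w S = (1 / real b) *\<^sub>R (\<Sum>i\<in>S. hinge_dir w i)"
  by (simp add: batch_dir_def hinge_dir_def sum.inter_filter)

lemma sum_batch_dir: "(\<Sum>S\<in>batches n b. batch_dir w S) = N *\<^sub>R mean_hinge_dir w"
proof -
  have sub: "\<And>S. S \<in> batches n b \<Longrightarrow> S \<subseteq> {..<n}" by (simp add: batches_def)
  have "(\<Sum>S\<in>batches n b. \<Sum>i\<in>S. hinge_dir w i)
      = (\<Sum>i<n. real (card {S \<in> batches n b. i \<in> S}) *\<^sub>R hinge_dir w i)"
    by (rule sum_sum_family_eq[OF finite_batches finite_lessThan sub])
  also have "\<dots> = (N * real b / real n) *\<^sub>R (\<Sum>i<n. hinge_dir w i)"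
    by (simp add: card_batches_containing N_eq scaleR_sum_right)
  finally have inner: "(\<Sum>S\<in>batches n b. \<Sum>i\<in>S. hinge_dir w i) = (N * real b / real n) *\<^sub>R (\<Sum>i<n. hinge_dir w i)" .
  have "(\<Sum>S\<in>batches n b. batch_dir w S) = (\<Sum>S\<in>batches n b. (1 / real b) *\<^sub>R (\<Sum>i\<in>S. hinge_dir w i))"
    using sub by (intro sum.cong refl batch_dir_eq) (meson finite_lessThan finite_subset)
  also have "\<dots> = (1 / real b) *\<^sub>R (N * real b / real n) *\<^sub>R (\<Sum>i<n. hinge_dir w i)"
    by (simp add: inner flip: scaleR_sum_right)
  also have "\<dots> = N *\<^sub>R mean_hinge_dir w"
    using b_ge_1 by (simp add: mean_hinge_dir_def)
  finally show ?thesis .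
qed

lemma sum_power2_norm_batch_dir:
  defines "p \<equiv> real b / real n" and "q \<equiv> real b * (real b - 1) / (real n * (real n - 1))"
  shows "(\<Sum>S\<in>batches n b. (norm (batch_dir w S))\<^sup>2)
       = N / (real b)\<^sup>2 * (q * (norm (\<Sum>i<n. hinge_dir w i))\<^sup>2 + (p - q) * (\<Sum>i<n. (norm (hinge_dir w i))\<^sup>2))"
proof -
  have sub: "\<And>S. S \<in> batches n b \<Longrightarrow> S \<subseteq> {..<n}" by (simp add: batches_def)
  have fin: "finite S" if "S \<in> batches n b" for S
    using sub[OF that] finite_subset by blast
  have card: "real (card {S \<in> batches n b. i \<in> S \<and> j \<in> S}) = (if i = j then N * p else N * q)"
    if "i < n" "j < n" for i j
    using that card_batches_containing[of i n b] card_batches_containing_pair[of i n j b]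
    by (cases "i = j") (simp_all add: N_eq p_def q_def)
  have dsum: "(\<Sum>i<n. \<Sum>j<n. hinge_dir w i \<bullet> hinge_dir w j) = (norm (\<Sum>i<n. hinge_dir w i))\<^sup>2"
    by (simp add: power2_norm_eq_inner inner_sum_left inner_sum_right) (rule sum.swap)
  have diag: "(\<Sum>i<n. hinge_dir w i \<bullet> hinge_dir w i) = (\<Sum>i<n. (norm (hinge_dir w i))\<^sup>2)"
    by (simp add: power2_norm_eq_inner)
  have "(\<Sum>S\<in>batches n b. (norm (\<Sum>i\<in>S. hinge_dir w i))\<^sup>2)
      = (\<Sum>i<n. \<Sum>j<n. real (card {S \<in> batches n b. i \<in> S \<and> j \<in> S}) * (hinge_dir w i \<bullet> hinge_dir w j))"
    by (rule sum_power2_norm_sum_family[OF finite_batches finite_lessThan sub])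
  also have "\<dots> = (\<Sum>i<n. \<Sum>j<n. (if i = j then N * p else N * q) * (hinge_dir w i \<bullet> hinge_dir w j))"
    by (intro sum.cong refl) (simp add: card)
  also have "\<dots> = N * q * (norm (\<Sum>i<n. hinge_dir w i))\<^sup>2
                  + (N * p - N * q) * (\<Sum>i<n. (norm (hinge_dir w i))\<^sup>2)"
    by (simp only: sum_sum_diag_split[OF finite_lessThan] dsum diag)
  finally have pairs: "(\<Sum>S\<in>batches n b. (norm (\<Sum>i\<in>S. hinge_dir w i))\<^sup>2)
      = N * q * (norm (\<Sum>i<n. hinge_dir w i))\<^sup>2 + (N * p - N * q) * (\<Sum>i<n. (norm (hinge_dir w i))\<^sup>2)" .
  have "(\<Sum>S\<in>batches n b. (norm (batch_dir w S))\<^sup>2)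
      = (\<Sum>S\<in>batches n b. (1 / real b)\<^sup>2 * (norm (\<Sum>i\<in>S. hinge_dir w i))\<^sup>2)"
    by (intro sum.cong refl) (simp add: fin batch_dir_eq power_mult_distrib power_divide)
  also have "\<dots> = (1 / real b)\<^sup>2 * (\<Sum>S\<in>batches n b. (norm (\<Sum>i\<in>S. hinge_dir w i))\<^sup>2)"
    by (simp add: sum_distrib_left)
  finally show ?thesis unfolding pairs by (simp add: power_divide algebra_simps)
qed

lemma beta_nonneg: "0 \<le> beta"
proof -
  have "0 \<le> real n * sigma2"
    using sigma2_ge n_ge_2 by (smt (verit) divide_nonneg_nonneg mult_nonneg_nonneg of_nat_0_le_iff zero_le_power2)
  hence "(real b - 1) * (-1) \<le> (real b - 1) * (real n * sigma2 - 1)"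
    using b_ge_1 by (intro mult_left_mono) auto
  hence "(real b - 1) * (-1) / (real n - 1) \<le> (real b - 1) * (real n * sigma2 - 1) / (real n - 1)"
    using n_ge_2 by (intro divide_right_mono) auto
  moreover have "-1 \<le> (real b - 1) * (-1) / (real n - 1)"
    using n_ge_2 b_le_n by (simp add: field_simps)
  ultimately show ?thesis unfolding beta_def by linarith
qed

lemma G2_nonneg: "0 \<le> G2"
  using beta_nonneg by (simp add: G2_def)

text \<open>Only the number \<open>m\<close> of examples violating the margin enters: their directions have
  total squared norm at most \<open>m\<close>, and their sum has squared norm at most \<open>\<parallel>X\<parallel>\<^sup>2 m \<le> n \<sigma>\<^sup>2 m\<close>.\<close>
lemma hinge_dir_sums_le:
  obtains m where "0 \<le> m" "m \<le> real n"
    and "(norm (\<Sum>i<n. hinge_dir w i))\<^sup>2 \<le> real n * sigma2 * m"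
    and "(\<Sum>i<n. (norm (hinge_dir w i))\<^sup>2) \<le> m"
proof -
  define a where "a i = (if y i * (w \<bullet> x i) < 1 then y i else 0)" for i
  define m where "m = (\<Sum>i<n. (a i)\<^sup>2)"
  have dir: "hinge_dir w i = a i *\<^sub>R x i" for i by (simp add: hinge_dir_def a_def)
  have m0: "0 \<le> m" unfolding m_def by (simp add: sum_nonneg)
  have "m \<le> (\<Sum>i<n. 1)" unfolding m_def using labels by (intro sum_mono) (auto simp: a_def)
  hence mn: "m \<le> real n" by simp
  have "(spec_norm n x)\<^sup>2 \<le> real n * sigma2" using sigma2_ge n_ge_2 by (simp add: field_simps)
  hence "(norm (\<Sum>i<n. hinge_dir w i))\<^sup>2 \<le> real n * sigma2 * m"
    unfolding dir using power2_norm_sum_le_spec_norm[of a x n] m0 m_def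
    by (meson mult_right_mono order_trans)
  moreover have "(\<Sum>i<n. (norm (hinge_dir w i))\<^sup>2) \<le> m"
    unfolding m_def dir using norm_x_le_1
    by (intro sum_mono) (simp add: power_mult_distrib mult_left_le power_le_one)
  ultimately show ?thesis using that m0 mn by blast
qed

lemma sum_power2_norm_batch_dir_le: "(\<Sum>S\<in>batches n b. (norm (batch_dir w S))\<^sup>2) \<le> N * G2"
proof -
  obtain m where mn: "0 \<le> m" "m \<le> real n"
    and sum_dir: "(norm (\<Sum>i<n. hinge_dir w i))\<^sup>2 \<le> real n * sigma2 * m"
    and dirs: "(\<Sum>i<n. (norm (hinge_dir w i))\<^sup>2) \<le> m"
    by (rule hinge_dir_sums_le)
  define p where "p = real b / real n"
  define q where "q = real b * (real b - 1) / (real n * (real n - 1))"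
  have n1: "1 < real n" using n_ge_2 by simp
  have qp: "q = p * ((real b - 1) / (real n - 1))"
    unfolding p_def q_def using n1 by (simp add: field_simps)
  have q0: "0 \<le> q" unfolding q_def using b_ge_1 n1 by simp
  have pq: "p - q = p * ((real n - real b) / (real n - 1))"
    unfolding p_def q_def using n1 by (simp add: field_simps)
  have pq0: "0 \<le> p - q" unfolding pq using b_le_n n1 by (simp add: p_def)
  have "q * (norm (\<Sum>i<n. hinge_dir w i))\<^sup>2 + (p - q) * (\<Sum>i<n. (norm (hinge_dir w i))\<^sup>2)
      \<le> q * (real n * sigma2 * m) + (p - q) * m"
    using q0 pq0 sum_dir dirs by (intro add_mono mult_left_mono)
  also have "\<dots> = m * p * ((real b - 1) / (real n - 1) * (real n * sigma2) + (real n - real b) / (real n - 1))"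
    unfolding pq unfolding qp by (simp add: algebra_simps)
  also have "(real b - 1) / (real n - 1) * (real n * sigma2) + (real n - real b) / (real n - 1)
      = ((real n - 1) + (real b - 1) * (real n * sigma2 - 1)) / (real n - 1)"
    by (simp add: add_divide_distrib[symmetric] algebra_simps)
  also have "\<dots> = beta" using n1 by (simp add: beta_def add_divide_distrib)
  also have "m * p * beta \<le> real n * p * beta"
    using mn beta_nonneg by (intro mult_right_mono) (auto simp: p_def)
  finally have "N / (real b)\<^sup>2 * (q * (norm (\<Sum>i<n. hinge_dir w i))\<^sup>2 + (p - q) * (\<Sum>i<n. (norm (hinge_dir w i))\<^sup>2))
      \<le> N / (real b)\<^sup>2 * (real n * p * beta)"
    using N_pos by (intro mult_left_mono) auto
  also have "\<dots> = N * G2" using b_ge_1 n1 by (simp add: p_def G2_def power2_eq_square)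
  finally show ?thesis by (simp add: sum_power2_norm_batch_dir p_def q_def)
qed

lemma power2_norm_mean_hinge_dir_le: "(norm (mean_hinge_dir w))\<^sup>2 \<le> G2"
proof -
  have "mean_hinge_dir w = (1 / real (card (batches n b))) *\<^sub>R (\<Sum>S\<in>batches n b. batch_dir w S)"
    using N_pos by (simp add: sum_batch_dir N_def)
  hence "(norm (mean_hinge_dir w))\<^sup>2 \<le> (\<Sum>S\<in>batches n b. (norm (batch_dir w S))\<^sup>2) / N"
    unfolding N_def
    by (simp only: convex_on_mean[OF finite_batches batches_nonempty convex_on_power2_norm])
  also have "\<dots> \<le> G2" using sum_power2_norm_batch_dir_le N_pos by (simp add: divide_le_eq mult.commute)
  finally show ?thesis .
qed

section \<open>Expected progress of one Pegasos step\<close>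

definition step :: "nat \<Rightarrow> 'a \<Rightarrow> nat set \<Rightarrow> 'a" where
  "step t w S = (1 - 1 / real t) *\<^sub>R w + (1 / (lam * real t)) *\<^sub>R batch_dir w S"

definition iterate :: "nat \<Rightarrow> (nat \<Rightarrow> nat set) \<Rightarrow> 'a" where
  "iterate t A = pegasos_w x y lam b A t"

lemma iterate_Suc: "1 \<le> t \<Longrightarrow> iterate (Suc t) A = step t (iterate t A) (A t)"
  using lam_pos by (simp add: iterate_def step_def batch_dir_def Let_def)

lemma iterate_fun_upd: "t \<le> s \<Longrightarrow> iterate t (A(s := S)) = iterate t A"
proof (induction t)
  case (Suc t)
  have "iterate t (A(s := S)) = iterate t A" by (rule Suc.IH) (use Suc.prems in simp)
  moreover have "(A(s := S)) t = A t" using Suc.prems by simp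
  ultimately show ?case unfolding iterate_def by (simp add: Let_def del: fun_upd_apply)
qed (simp add: iterate_def)

lemma sum_power2_norm_step_le:
  assumes t: "1 \<le> t"
  shows "(\<Sum>S\<in>batches n b. (norm (lam *\<^sub>R step t w S))\<^sup>2)
       \<le> N * ((1 - 1 / real t) * (norm (lam *\<^sub>R w))\<^sup>2 + G2 / real t)"
proof -
  define s where "s = 1 / real t"
  have s: "0 \<le> s" "s \<le> 1" using t by (auto simp: s_def)
  have eq: "lam *\<^sub>R step t w S = (1 - s) *\<^sub>R (lam *\<^sub>R w) + s *\<^sub>R batch_dir w S" for S
    using lam_pos by (simp add: step_def s_def scaleR_add_right)
  have "(norm (lam *\<^sub>R step t w S))\<^sup>2 \<le> (1 - s) * (norm (lam *\<^sub>R w))\<^sup>2 + s * (norm (batch_dir w S))\<^sup>2" for S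
  proof -
    have "0 \<le> s * (1 - s) * (norm (lam *\<^sub>R w - batch_dir w S))\<^sup>2" using s by simp
    thus ?thesis unfolding eq power2_norm_convex_comb by linarith
  qed
  hence "(\<Sum>S\<in>batches n b. (norm (lam *\<^sub>R step t w S))\<^sup>2)
      \<le> (\<Sum>S\<in>batches n b. (1 - s) * (norm (lam *\<^sub>R w))\<^sup>2 + s * (norm (batch_dir w S))\<^sup>2)"
    by (rule sum_mono)
  also have "\<dots> = N * ((1 - s) * (norm (lam *\<^sub>R w))\<^sup>2) + s * (\<Sum>S\<in>batches n b. (norm (batch_dir w S))\<^sup>2)"
    by (simp add: sum.distrib sum_distrib_left N_def)
  also have "\<dots> \<le> N * ((1 - s) * (norm (lam *\<^sub>R w))\<^sup>2) + s * (N * G2)"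
    using sum_power2_norm_batch_dir_le s by (intro add_left_mono mult_left_mono) auto
  finally show ?thesis by (simp add: s_def algebra_simps)
qed

lemma sum_power2_norm_diff_batch_dir_le:
  "(\<Sum>S\<in>batches n b. (norm (v - batch_dir w S))\<^sup>2) \<le> N * (2 * (norm v)\<^sup>2 + 2 * G2)"
proof -
  have "(\<Sum>S\<in>batches n b. (norm (v - batch_dir w S))\<^sup>2)
      \<le> (\<Sum>S\<in>batches n b. 2 * (norm v)\<^sup>2 + 2 * (norm (batch_dir w S))\<^sup>2)"
    by (intro sum_mono power2_norm_diff_le)
  also have "\<dots> \<le> N * (2 * (norm v)\<^sup>2 + 2 * G2)"
    using sum_power2_norm_batch_dir_le[of w]
    by (simp add: sum.distrib sum_distrib_left[symmetric] N_def algebra_simps)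
  finally show ?thesis .
qed

lemma sum_power2_dist_step_le:
  assumes t: "1 \<le> t"
  shows "(\<Sum>S\<in>batches n b. (norm (step t w S - u))\<^sup>2)
       \<le> N * ((1 - 1 / real t) * (norm (w - u))\<^sup>2 - 2 / (lam * real t) * (P w - P u)
              + 2 / (lam * real t)\<^sup>2 * (norm (lam *\<^sub>R w))\<^sup>2 + 2 * G2 / (lam * real t)\<^sup>2)"
proof -
  define e where "e = 1 / (lam * real t)"
  define g where "g = lam *\<^sub>R w - mean_hinge_dir w"
  have e: "0 < e" "e * lam = 1 / real t" using lam_pos t by (auto simp: e_def)
  have expand: "(norm (step t w S - u))\<^sup>2
      = (norm (w - u))\<^sup>2 - 2 * e * ((lam *\<^sub>R w - batch_dir w S) \<bullet> (w - u))
        + e\<^sup>2 * (norm (lam *\<^sub>R w - batch_dir w S))\<^sup>2" for S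
  proof -
    have eq: "step t w S - u = (w - u) - e *\<^sub>R (lam *\<^sub>R w - batch_dir w S)"
      using lam_pos t by (simp add: step_def e_def algebra_simps)
    show ?thesis unfolding eq by (rule power2_norm_diff_scaleR)
  qed
  have mean: "(\<Sum>S\<in>batches n b. (lam *\<^sub>R w - batch_dir w S) \<bullet> (w - u)) = N * (g \<bullet> (w - u))"
    by (simp add: g_def sum_batch_dir inner_diff_left sum_subtractf N_def right_diff_distrib
        flip: inner_sum_left)
  have "P w - P u + lam / 2 * (norm (w - u))\<^sup>2 \<le> g \<bullet> (w - u)"
    unfolding g_def by (rule svm_primal_strong_subgradient)
  hence first: "N * (norm (w - u))\<^sup>2 - 2 * e * (N * (g \<bullet> (w - u)))
      \<le> N * (norm (w - u))\<^sup>2 - 2 * e * (N * (P w - P u + lam / 2 * (norm (w - u))\<^sup>2))"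
    using e N_pos by (intro diff_left_mono mult_left_mono) auto
  have "(\<Sum>S\<in>batches n b. (norm (step t w S - u))\<^sup>2)
      = N * (norm (w - u))\<^sup>2 - 2 * e * (N * (g \<bullet> (w - u)))
        + e\<^sup>2 * (\<Sum>S\<in>batches n b. (norm (lam *\<^sub>R w - batch_dir w S))\<^sup>2)"
    by (simp add: expand sum.distrib sum_subtractf mean N_def flip: sum_distrib_left)
  also have "\<dots> \<le> N * (norm (w - u))\<^sup>2 - 2 * e * (N * (P w - P u + lam / 2 * (norm (w - u))\<^sup>2))
        + e\<^sup>2 * (N * (2 * (norm (lam *\<^sub>R w))\<^sup>2 + 2 * G2))"
    by (intro add_mono mult_left_mono first sum_power2_norm_diff_batch_dir_le) auto
  also have "\<dots> = N * ((1 - e * lam) * (norm (w - u))\<^sup>2 - 2 * e * (P w - P u)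
              + 2 * e\<^sup>2 * (norm (lam *\<^sub>R w))\<^sup>2 + 2 * e\<^sup>2 * G2)"
    by (simp add: algebra_simps)
  finally show ?thesis using e by (simp add: e_def power_divide)
qed

definition expect :: "((nat \<Rightarrow> nat set) \<Rightarrow> real) \<Rightarrow> real" where
  "expect f = measure_pmf.expectation (batch_seq_pmf n b T) f"

lemma finite_set_batch_seq_pmf: "finite (set_pmf (batch_seq_pmf n b T))"
  unfolding batch_seq_pmf_def using finite_batches batches_nonempty
  by (subst set_Pi_pmf) (auto intro!: finite_PiE_dflt)

lemma integrable_batch_seq_pmf:
  fixes f :: "(nat \<Rightarrow> nat set) \<Rightarrow> real"
  shows "integrable (measure_pmf (batch_seq_pmf n b T)) f"
  by (rule integrable_measure_pmf_finite[OF finite_set_batch_seq_pmf])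

lemma expect_add: "expect (\<lambda>A. f A + g A) = expect f + expect g"
  and expect_diff: "expect (\<lambda>A. f A - g A) = expect f - expect g"
  and expect_cmult: "expect (\<lambda>A. c * f A) = c * expect f"
  and expect_const: "expect (\<lambda>A. c) = c"
  and expect_sum: "expect (\<lambda>A. \<Sum>t\<in>I. h t A) = (\<Sum>t\<in>I. expect (h t))"
  unfolding expect_def by (simp_all add: integrable_batch_seq_pmf)

lemma expect_mono: "(\<And>A. f A \<le> g A) \<Longrightarrow> expect f \<le> expect g"
  unfolding expect_def by (intro integral_mono integrable_batch_seq_pmf)

lemma expect_nonneg: "(\<And>A. 0 \<le> f A) \<Longrightarrow> 0 \<le> expect f"
  using expect_mono[of "\<lambda>_. 0" f] by (simp add: expect_const)

text \<open>The batch \<open>A t\<close> is independent of \<open>iterate t A\<close>, which only depends on earlier batches.\<close>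
lemma expect_step:
  assumes t: "t \<in> {1..T}"
  shows "expect (\<lambda>A. h (iterate t A) (A t)) = expect (\<lambda>A. (\<Sum>S\<in>batches n b. h (iterate t A) S) / N)"
proof -
  have fin: "finite (set_pmf (pmf_of_set (batches n b)))"
    using finite_batches batches_nonempty by simp
  have "expect (\<lambda>A. h (iterate t A) (A t))
      = expect (\<lambda>A. measure_pmf.expectation (pmf_of_set (batches n b))
                      (\<lambda>S. h (iterate t (A(t := S))) ((A(t := S)) t)))"
    unfolding expect_def batch_seq_pmf_def
    by (rule expectation_Pi_pmf_resample) (use t fin in auto)
  also have "\<dots> = expect (\<lambda>A. (\<Sum>S\<in>batches n b. h (iterate t A) S) / N)"
    using finite_batches batches_nonempty
    by (simp add: iterate_fun_upd integral_pmf_of_set N_def)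
  finally show ?thesis .
qed

lemma expect_step_le:
  assumes t: "t \<in> {1..T}" and le: "\<And>w. (\<Sum>S\<in>batches n b. h w S) \<le> N * g w"
  shows "expect (\<lambda>A. h (iterate t A) (A t)) \<le> expect (\<lambda>A. g (iterate t A))"
  unfolding expect_step[OF t]
proof (rule expect_mono)
  fix A
  show "(\<Sum>S\<in>batches n b. h (iterate t A) S) / N \<le> g (iterate t A)"
    using le[of "iterate t A"] N_pos by (simp add: pos_divide_le_eq mult.commute)
qed

definition wopt :: 'a where "wopt = (SOME w. \<forall>v. P w \<le> P v)"

lemma wopt_min: "P wopt \<le> P w"
  using someI_ex[OF svm_primal_has_min] by (simp add: wopt_def)

definition dist2 :: "nat \<Rightarrow> real" where
  "dist2 t = expect (\<lambda>A. (norm (iterate t A - wopt))\<^sup>2)"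

definition norm2 :: "nat \<Rightarrow> real" where
  "norm2 t = expect (\<lambda>A. (norm (lam *\<^sub>R iterate t A))\<^sup>2)"

definition excess :: "nat \<Rightarrow> real" where
  "excess t = expect (\<lambda>A. P (iterate t A)) - P wopt"

lemma norm2_le:
  assumes "1 \<le> t" "t \<le> Suc T"
  shows "norm2 t \<le> G2"
proof (rule recurrence_le_const[OF _ _ assms])
  show "norm2 1 \<le> G2" using G2_nonneg by (simp add: norm2_def iterate_def expect_const)
  fix t assume t: "1 \<le> t" "t \<le> T"
  have "norm2 (Suc t) \<le> expect (\<lambda>A. (1 - 1 / real t) * (norm (lam *\<^sub>R iterate t A))\<^sup>2 + G2 / real t)"
    unfolding norm2_def iterate_Suc[OF t(1)]
    by (rule expect_step_le) (use t sum_power2_norm_step_le in auto)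
  thus "norm2 (Suc t) \<le> (1 - 1 / real t) * norm2 t + G2 / real t"
    by (simp add: expect_add expect_cmult expect_const norm2_def)
qed

lemma dist2_Suc_le:
  assumes t: "t \<in> {1..T}"
  shows "dist2 (Suc t) \<le> (1 - 1 / real t) * dist2 t - 2 / (lam * real t) * excess t
                          + 4 * G2 / (lam * real t)\<^sup>2"
proof -
  have t1: "1 \<le> t" using t by simp
  have "dist2 (Suc t) \<le> expect (\<lambda>A. (1 - 1 / real t) * (norm (iterate t A - wopt))\<^sup>2
          - 2 / (lam * real t) * (P (iterate t A) - P wopt)
          + 2 / (lam * real t)\<^sup>2 * (norm (lam *\<^sub>R iterate t A))\<^sup>2 + 2 * G2 / (lam * real t)\<^sup>2)"
    unfolding dist2_def iterate_Suc[OF t1]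
    by (rule expect_step_le[OF t]) (rule sum_power2_dist_step_le[OF t1])
  also have "\<dots> = (1 - 1 / real t) * dist2 t - 2 / (lam * real t) * excess t
          + 2 / (lam * real t)\<^sup>2 * norm2 t + 2 * G2 / (lam * real t)\<^sup>2"
    by (simp only: expect_add expect_diff expect_cmult expect_const dist2_def norm2_def excess_def)
  also have "\<dots> \<le> (1 - 1 / real t) * dist2 t - 2 / (lam * real t) * excess t
          + 2 / (lam * real t)\<^sup>2 * G2 + 2 * G2 / (lam * real t)\<^sup>2"
    using norm2_le[of t] t by (intro add_right_mono add_left_mono mult_left_mono) auto
  finally show ?thesis by simp
qed

lemma excess_ge: "lam / 2 * dist2 t \<le> excess t"
proof -
  have "lam / 2 * dist2 t = expect (\<lambda>A. lam / 2 * (norm (iterate t A - wopt))\<^sup>2)"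
    by (simp only: dist2_def expect_cmult)
  also have "\<dots> \<le> expect (\<lambda>A. P (iterate t A) - P wopt)"
    by (intro expect_mono svm_primal_quadratic_growth wopt_min)
  finally show ?thesis by (simp add: excess_def expect_diff expect_const)
qed

lemma dist2_le:
  assumes "2 \<le> t" "t \<le> Suc T"
  shows "dist2 t \<le> 8 * G2 / (lam\<^sup>2 * real t)"
proof -
  have "dist2 t \<le> 2 * (4 * G2 / lam\<^sup>2) / real t"
  proof (rule recurrence_le_inverse[OF _ _ _ assms])
    show "0 \<le> 4 * G2 / lam\<^sup>2" using G2_nonneg by simp
    show "0 \<le> dist2 1" unfolding dist2_def by (rule expect_nonneg) simp
    fix t assume t: "1 \<le> t" "t \<le> T"
    have "2 / (lam * real t) * (lam / 2 * dist2 t) \<le> 2 / (lam * real t) * excess t"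
      using excess_ge lam_pos by (intro mult_left_mono) auto
    moreover have "2 / (lam * real t) * (lam / 2 * dist2 t) = dist2 t / real t"
      using lam_pos by simp
    moreover have "4 * G2 / (lam * real t)\<^sup>2 = 4 * G2 / lam\<^sup>2 / (real t)\<^sup>2"
      by (simp add: power_mult_distrib)
    ultimately show "dist2 (Suc t) \<le> (1 - 2 / real t) * dist2 t + 4 * G2 / lam\<^sup>2 / (real t)\<^sup>2"
      using dist2_Suc_le[of t] t by (simp add: algebra_simps diff_divide_distrib)
  qed
  thus ?thesis by simp
qed

lemma excess_le:
  assumes t: "t \<in> {1..T}"
  shows "excess t \<le> (real t - 1) * (lam / 2 * dist2 t) - real t * (lam / 2 * dist2 (Suc t))
                     + 2 * G2 / lam / real t"
proof -
  have t1: "1 \<le> real t" using t by simp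
  have "excess t = lam * real t / 2 * (2 / (lam * real t) * excess t)"
    using lam_pos t1 by simp
  also have "\<dots> \<le> lam * real t / 2 * ((1 - 1 / real t) * dist2 t - dist2 (Suc t) + 4 * G2 / (lam * real t)\<^sup>2)"
    using dist2_Suc_le[OF t] lam_pos t1 by (intro mult_left_mono) auto
  also have "\<dots> = (real t - 1) * (lam / 2 * dist2 t) - real t * (lam / 2 * dist2 (Suc t))
                  + 2 * G2 / lam / real t"
    using lam_pos t1 by (simp add: field_simps power2_eq_square)
  finally show ?thesis .
qed

section \<open>Suffix averaging\<close>

definition suffix :: "nat set" where "suffix = {Suc (T div 2)..T}"

lemma sum_excess_suffix_le: "(\<Sum>t\<in>suffix. excess t) \<le> 6 * G2 / lam"
proof -
  define k where "k = T div 2"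
  have kT: "2 * real k \<le> real T" "real T \<le> 2 * real k + 1"
    unfolding k_def by linarith+
  have g0: "0 \<le> 2 * G2 / lam" using G2_nonneg lam_pos by simp
  have "(\<Sum>t\<in>suffix. excess t)
      \<le> real k * (lam / 2 * dist2 (Suc k)) - real T * (lam / 2 * dist2 (Suc T))
        + 2 * G2 / lam * (real T - real k) / (real k + 1)"
    unfolding suffix_def k_def
    by (rule sum_le_telescoping[OF _ g0]) (use excess_le in auto)
  moreover have "real k * (lam / 2 * dist2 (Suc k)) \<le> 4 * G2 / lam"
  proof (cases "k = 0")
    case False
    have "dist2 (Suc k) \<le> 8 * G2 / (lam\<^sup>2 * real (Suc k))"
      using False kT by (intro dist2_le) auto
    hence "real k * (lam / 2 * dist2 (Suc k)) \<le> real k * (lam / 2 * (8 * G2 / (lam\<^sup>2 * real (Suc k))))"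
      using lam_pos by (intro mult_left_mono) auto
    also have "\<dots> = 4 * G2 / lam * (real k / real (Suc k))"
      using lam_pos by (simp add: field_simps power2_eq_square del: of_nat_Suc)
    also have "\<dots> \<le> 4 * G2 / lam"
      using G2_nonneg lam_pos by (intro mult_left_le) auto
    finally show ?thesis .
  qed (use G2_nonneg lam_pos in simp)
  moreover have "0 \<le> real T * (lam / 2 * dist2 (Suc T))"
    unfolding dist2_def using lam_pos by (intro mult_nonneg_nonneg expect_nonneg) auto
  moreover have "2 * G2 / lam * (real T - real k) / (real k + 1) \<le> 2 * G2 / lam"
  proof -
    have "(real T - real k) / (real k + 1) \<le> 1" using kT by (simp add: divide_le_eq)
    from mult_left_mono[OF this g0] show ?thesis by simp
  qed
  ultimately show ?thesis by linarith
qed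

lemma card_suffix: "real (card suffix) = real T - real (T div 2)"
  unfolding suffix_def by (simp add: of_nat_diff)

lemma suffix_nonempty: "suffix \<noteq> {}"
  using T_ge_1 by (simp add: suffix_def)

lemma svm_primal_pegasos_avg_le:
  "P (pegasos_avg x y lam b T A)
     \<le> 1 / real (card suffix) * (\<Sum>t\<in>suffix. P (iterate t A))
       + 1 / real T * (G2 / (2 * lam)
           + 2 / lam * (1 / real (card suffix) * (\<Sum>t\<in>suffix. (norm (lam *\<^sub>R iterate t A))\<^sup>2)))"
proof -
  define m where "m = real (card suffix)"
  define u where "u = (1 / m) *\<^sub>R (\<Sum>t\<in>suffix. iterate t A)"
  have T: "1 \<le> real T" using T_ge_1 by simp
  have kT: "2 * real (T div 2) \<le> real T" "real T \<le> 2 * real (T div 2) + 1" by linarith+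
  have m: "m = real T - real (T div 2)" "0 < m"
    using card_suffix suffix_nonempty by (auto simp: m_def card_gt_0_iff suffix_def)
  have c: "1 \<le> 2 * m / real T" "2 * m / real T \<le> 1 + 1 / real T"
    using m kT T by (simp_all add: field_simps)
  have avg: "pegasos_avg x y lam b T A = (2 * m / real T) *\<^sub>R u"
    using m(2) by (simp add: pegasos_avg_def u_def iterate_def suffix_def)
  have "P (pegasos_avg x y lam b T A) \<le> P u + 1 / real T * (G2 / (2 * lam) + 2 * lam * (norm u)\<^sup>2)"
    unfolding avg by (rule svm_primal_scaleR_le[OF c _ power2_norm_mean_hinge_dir_le]) (use T in simp)
  moreover have "P u \<le> 1 / m * (\<Sum>t\<in>suffix. P (iterate t A))"
    using convex_on_mean[OF _ suffix_nonempty convex_on_svm_primal, of "\<lambda>t. iterate t A"]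
    by (simp add: u_def m_def suffix_def)
  moreover have "2 * lam * (norm u)\<^sup>2 \<le> 2 / lam * (1 / m * (\<Sum>t\<in>suffix. (norm (lam *\<^sub>R iterate t A))\<^sup>2))"
  proof -
    have "lam *\<^sub>R u = (1 / m) *\<^sub>R (\<Sum>t\<in>suffix. lam *\<^sub>R iterate t A)"
      by (simp add: u_def scaleR_sum_right)
    hence "(norm (lam *\<^sub>R u))\<^sup>2 \<le> 1 / m * (\<Sum>t\<in>suffix. (norm (lam *\<^sub>R iterate t A))\<^sup>2)"
      using convex_on_mean[OF _ suffix_nonempty convex_on_power2_norm, of "\<lambda>t. lam *\<^sub>R iterate t A"]
      by (simp add: m_def suffix_def)
    hence "2 / lam * (norm (lam *\<^sub>R u))\<^sup>2
        \<le> 2 / lam * (1 / m * (\<Sum>t\<in>suffix. (norm (lam *\<^sub>R iterate t A))\<^sup>2))"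
      using lam_pos by (intro mult_left_mono) auto
    moreover have "2 * lam * (norm u)\<^sup>2 = 2 / lam * (norm (lam *\<^sub>R u))\<^sup>2"
      using lam_pos by (simp add: power_mult_distrib power2_eq_square)
    ultimately show ?thesis by simp
  qed
  ultimately show ?thesis unfolding m_def using T by (smt (verit) mult_left_mono divide_nonneg_nonneg)
qed

lemma expect_svm_primal_pegasos_avg_le:
  "expect (\<lambda>A. P (pegasos_avg x y lam b T A)) - P wopt \<le> G2 * (30 / (lam * real T))"
proof -
  define m where "m = real (card suffix)"
  have T: "1 \<le> real T" using T_ge_1 by simp
  have m: "0 < m" "1 / m \<le> 2 / real T"
  proof -
    have "2 * real (T div 2) \<le> real T" by linarith
    thus "0 < m" "1 / m \<le> 2 / real T"
      using card_suffix suffix_nonempty T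
      by (auto simp: m_def card_gt_0_iff suffix_def field_simps)
  qed
  have "expect (\<lambda>A. P (pegasos_avg x y lam b T A))
      \<le> 1 / m * (\<Sum>t\<in>suffix. excess t + P wopt) + 1 / real T * (G2 / (2 * lam) + 2 / lam * (1 / m * (\<Sum>t\<in>suffix. norm2 t)))"
    using expect_mono[OF svm_primal_pegasos_avg_le]
    by (simp only: expect_add expect_cmult expect_const expect_sum excess_def norm2_def m_def diff_add_cancel)
  also have "\<dots> = P wopt + 1 / m * (\<Sum>t\<in>suffix. excess t) + 1 / real T * (G2 / (2 * lam) + 2 / lam * (1 / m * (\<Sum>t\<in>suffix. norm2 t)))"
    using m by (simp add: sum.distrib m_def field_simps)
  also have "\<dots> \<le> P wopt + 2 / real T * (6 * G2 / lam) + 1 / real T * (G2 / (2 * lam) + 2 / lam * G2)"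
  proof -
    have "1 / m * (\<Sum>t\<in>suffix. excess t) \<le> 2 / real T * (6 * G2 / lam)"
    proof (rule mult_mono)
      have "0 \<le> lam / 2 * dist2 t" for t
        unfolding dist2_def using lam_pos by (intro mult_nonneg_nonneg expect_nonneg) auto
      thus "0 \<le> (\<Sum>t\<in>suffix. excess t)" by (intro sum_nonneg) (use excess_ge order_trans in blast)
    qed (use m sum_excess_suffix_le T in auto)
    moreover have "1 / m * (\<Sum>t\<in>suffix. norm2 t) \<le> G2"
    proof -
      have "(\<Sum>t\<in>suffix. norm2 t) \<le> m * G2"
        unfolding m_def by (rule sum_bounded_above) (auto simp: suffix_def intro: norm2_le)
      thus ?thesis using m by (simp add: field_simps)
    qed
    ultimately show ?thesis using lam_pos T
      by (intro add_mono add_left_mono mult_left_mono) auto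
  qed
  also have "\<dots> \<le> P wopt + G2 * (30 / (lam * real T))"
    using G2_nonneg lam_pos T by (simp add: field_simps)
  finally show ?thesis by simp
qed

lemma INF_svm_primal: "(INF w. P w) = P wopt"
  by (rule cInf_eq_minimum) (auto intro: wopt_min)

end

theorem theorem1:
  fixes n b T :: nat and x :: "nat \<Rightarrow> 'a::euclidean_space" and y :: "nat \<Rightarrow> real"
    and sigma2 lam :: real
  assumes "n \<ge> 2"
    and "\<forall>i<n. y i \<in> {-1, 1}"
    and "\<forall>i<n. norm (x i) \<le> 1"
    and "sigma2 \<ge> (1 / real n) * (spec_norm n x)\<^sup>2"
    and "lam > 0"
    and "b \<in> {1..n}"
    and "T \<ge> 1"
  shows "measure_pmf.expectation (batch_seq_pmf n b T)
            (\<lambda>A. svm_primal n x y lam (pegasos_avg x y lam b T A))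
          - (INF w. svm_primal n x y lam w)
         \<le> ((1 + (real b - 1) * (real n * sigma2 - 1) / (real n - 1)) / real b) * (30 / (lam * real T))"
proof -
  interpret pegasos n x y lam b T sigma2
    by unfold_locales (use assms in auto)
  show ?thesis
    using expect_svm_primal_pegasos_avg_le
    by (simp add: INF_svm_primal expect_def G2_def beta_def)
qed

end
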